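(* There exists an uncountable semigroup $(S,+)$ which is very weakly cancellative, has no idempotent element, and in which every uncountable subset of $S$ is an IP set.
   Context: For an infinite semigroup $S$ of cardinality $\kappa$: a left solution set is a set $\{x\in S: a+x=b\}$ and a right solution set is a set $\{x\in S: x+a=b\}$ for some $a,b\in S$; $S$ is very weakly cancellative if the union of fewer than $\kappa$ left solution sets has cardinality less than $\kappa$ and the union of fewer than $\kappa$ right solution sets has cardinality less than $\kappa$. $e$ is idempotent if $e+e=e$. $A\subseteq S$ is an IP set if there is a sequence $\langle x_n\rangle_{n=1}^\infty$ in $S$ such that every finite sum $\sum_{n\in H}x_n$ (in increasing order of indices, $H$ a nonempty finite subset of $\mathbb{N}$) lies in $A$. *)

theory Defs
  imports Complex_Main "HOL-Library.Countable_Set"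
begin

definition semigroup_on :: "'a set \<Rightarrow> ('a \<Rightarrow> 'a \<Rightarrow> 'a) \<Rightarrow> bool" where
  "semigroup_on S f \<longleftrightarrow> (\<forall>x\<in>S. \<forall>y\<in>S. f x y \<in> S) \<and>
     (\<forall>x\<in>S. \<forall>y\<in>S. \<forall>z\<in>S. f (f x y) z = f x (f y z))"

definition left_sol :: "'a set \<Rightarrow> ('a \<Rightarrow> 'a \<Rightarrow> 'a) \<Rightarrow> 'a \<Rightarrow> 'a \<Rightarrow> 'a set" where
  "left_sol S f a b = {x \<in> S. f a x = b}"

definition right_sol :: "'a set \<Rightarrow> ('a \<Rightarrow> 'a \<Rightarrow> 'a) \<Rightarrow> 'a \<Rightarrow> 'a \<Rightarrow> 'a set" where
  "right_sol S f a b = {x \<in> S. f x a = b}"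

definition very_weakly_cancellative :: "'a set \<Rightarrow> ('a \<Rightarrow> 'a \<Rightarrow> 'a) \<Rightarrow> bool" where
  "very_weakly_cancellative S f \<longleftrightarrow>
     (\<forall>\<A>. \<A> \<subseteq> {left_sol S f a b | a b. a \<in> S \<and> b \<in> S} \<and> ordLess2 (card_of \<A>) (card_of S)
          \<longrightarrow> ordLess2 (card_of (\<Union>\<A>)) (card_of S)) \<and>
     (\<forall>\<A>. \<A> \<subseteq> {right_sol S f a b | a b. a \<in> S \<and> b \<in> S} \<and> ordLess2 (card_of \<A>) (card_of S)
          \<longrightarrow> ordLess2 (card_of (\<Union>\<A>)) (card_of S))"

definition idempotent_in :: "'a set \<Rightarrow> ('a \<Rightarrow> 'a \<Rightarrow> 'a) \<Rightarrow> 'a \<Rightarrow> bool" where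
  "idempotent_in S f e \<longleftrightarrow> e \<in> S \<and> f e e = e"

fun lsum :: "('a \<Rightarrow> 'a \<Rightarrow> 'a) \<Rightarrow> 'a list \<Rightarrow> 'a" where
  "lsum f [] = undefined"
| "lsum f [x] = x"
| "lsum f (x # y # xs) = f x (lsum f (y # xs))"

definition fin_sum :: "('a \<Rightarrow> 'a \<Rightarrow> 'a) \<Rightarrow> (nat \<Rightarrow> 'a) \<Rightarrow> nat set \<Rightarrow> 'a" where
  "fin_sum f x H = lsum f (map x (sorted_list_of_set H))"

definition IP_set :: "'a set \<Rightarrow> ('a \<Rightarrow> 'a \<Rightarrow> 'a) \<Rightarrow> 'a set \<Rightarrow> bool" where
  "IP_set S f A \<longleftrightarrow> (\<exists>x :: nat \<Rightarrow> 'a. (\<forall>n. x n \<in> S) \<and>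
      (\<forall>H. finite H \<and> H \<noteq> {} \<longrightarrow> fin_sum f x H \<in> A))"

end

theory Submission
  imports Defs "HOL-Analysis.Continuum_Not_Denumerable"
begin

(* Well-order [0,1) and keep the points with only countably many predecessors: they form an
   uncountable set in which every proper initial segment is countable (an omega_1-like order).
   Over each such point put a copy of the positive integers, and add elements of different copies
   by keeping the one in the later copy.  Every equation a + x = b or x + a = b then forces x to
   lie in the copy of b or in a copy below that of a, so solution sets are countable and the
   semigroup is very weakly cancellative; an idempotent would need 2n = n in some copy.  An
   uncountable set meets copies cofinally, so it contains a sequence in strictly increasing copies,
   and every finite sum of such a sequence equals its last term. *)

unbundle cardinal_syntax

lemma countable_iff_card_of_ordLeq_nat: "countable A \<longleftrightarrow> |A| \<le>o |UNIV :: nat set|"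
  unfolding countable_def card_of_ordLeq[symmetric] by auto

lemma card_of_Union_countable_ordLess:
  assumes S: "\<not> countable S" and countable: "\<And>X. X \<in> \<A> \<Longrightarrow> countable X" and less: "|\<A>| <o |S|"
  shows "|\<Union>\<A>| <o |S|"
proof (cases "countable \<A>")
  case True
  then have "countable (\<Union>\<A>)"
    using countable_UN[of \<A> "\<lambda>X. X"] countable by simp
  then have "|\<Union>\<A>| \<le>o |UNIV :: nat set|"
    by (simp flip: countable_iff_card_of_ordLeq_nat)
  moreover have "|UNIV :: nat set| <o |S|"
    using S not_ordLeq_iff_ordLess[OF card_of_Well_order card_of_Well_order, of S "UNIV :: nat set"]
    unfolding countable_iff_card_of_ordLeq_nat by simp
  ultimately show ?thesis
    by (rule ordLeq_ordLess_trans)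
next
  case False
  then have nat_le: "|UNIV :: nat set| \<le>o |\<A>|"
    using not_ordLeq_iff_ordLess[OF card_of_Well_order card_of_Well_order, of \<A> "UNIV :: nat set"]
    unfolding countable_iff_card_of_ordLeq_nat by (simp add: ordLess_imp_ordLeq)
  have "|\<Union>X\<in>\<A>. X| \<le>o |\<A>|"
  proof (rule card_of_UNION_ordLeq_infinite)
    show "infinite \<A>"
      using False countable_finite by blast
    show "\<forall>X\<in>\<A>. |X| \<le>o |\<A>|"
      using countable nat_le by (auto simp: countable_iff_card_of_ordLeq_nat intro: ordLeq_transitive)
  qed (rule ordLeq_refl[OF card_of_Card_order])
  then show ?thesis
    using less by (simp add: ordLeq_ordLess_trans)
qed

lemma very_weakly_cancellative_if_countable_solutions:
  assumes "\<not> countable S"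
    and "\<And>a b. a \<in> S \<Longrightarrow> b \<in> S \<Longrightarrow> countable (left_sol S f a b)"
    and "\<And>a b. a \<in> S \<Longrightarrow> b \<in> S \<Longrightarrow> countable (right_sol S f a b)"
  shows "very_weakly_cancellative S f"
  unfolding very_weakly_cancellative_def
  by (intro conjI allI impI card_of_Union_countable_ordLess[OF assms(1)]) (use assms(2,3) in auto)

lemma lsum_absorbing:
  assumes absorb: "\<And>i j. i < j \<Longrightarrow> f (x i) (x j) = x j"
  shows "sorted_wrt (<) l \<Longrightarrow> l \<noteq> [] \<Longrightarrow> lsum f (map x l) = x (Max (set l))"
proof (induction l rule: induct_list012)
  case (3 i j l)
  then have "i < Max (set (j # l))" by (simp add: Max_gr_iff)
  then show ?case using 3 absorb by (simp add: Max_insert2)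
qed simp_all

lemma fin_sum_absorbing:
  assumes "\<And>i j. i < j \<Longrightarrow> f (x i) (x j) = x j" "finite H" "H \<noteq> {}"
  shows "fin_sum f x H = x (Max H)"
  using lsum_absorbing[of f x, OF assms(1), of "sorted_list_of_set H"] assms(2,3)
  unfolding fin_sum_def by simp

definition ordinal_sum :: "('a \<Rightarrow> 'i) \<Rightarrow> 'i rel \<Rightarrow> ('a \<Rightarrow> 'a \<Rightarrow> 'a) \<Rightarrow> 'a \<Rightarrow> 'a \<Rightarrow> 'a" where
  "ordinal_sum \<pi> r g x y = (if \<pi> x = \<pi> y then g x y else if (\<pi> x, \<pi> y) \<in> r then y else x)"

lemma ordinal_sum_assoc:
  assumes "trans r" "antisym r" "total r"
    and grade: "\<And>x y. \<pi> x = \<pi> y \<Longrightarrow> \<pi> (g x y) = \<pi> x"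
    and assoc: "\<And>x y z. \<pi> x = \<pi> y \<Longrightarrow> \<pi> y = \<pi> z \<Longrightarrow> g (g x y) z = g x (g y z)"
  shows "ordinal_sum \<pi> r g (ordinal_sum \<pi> r g x y) z = ordinal_sum \<pi> r g x (ordinal_sum \<pi> r g y z)"
proof -
  have tot: "(a, b) \<in> r \<or> (b, a) \<in> r" if "a \<noteq> b" for a b
    using assms(3) that by (auto simp: total_on_def)
  show ?thesis
    unfolding ordinal_sum_def
    by (auto simp: grade assoc split: if_splits dest: tot antisymD[OF assms(2)] transD[OF assms(1)])
qed

lemma semigroup_on_ordinal_sum:
  assumes "trans r" "antisym r" "total r"
    and grade: "\<And>x y. \<pi> x = \<pi> y \<Longrightarrow> \<pi> (g x y) = \<pi> x"
    and assoc: "\<And>x y z. \<pi> x = \<pi> y \<Longrightarrow> \<pi> y = \<pi> z \<Longrightarrow> g (g x y) z = g x (g y z)"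
    and closed: "\<And>x y. x \<in> S \<Longrightarrow> y \<in> S \<Longrightarrow> \<pi> x = \<pi> y \<Longrightarrow> g x y \<in> S"
  shows "semigroup_on S (ordinal_sum \<pi> r g)"
proof -
  have "ordinal_sum \<pi> r g x y \<in> S" if "x \<in> S" "y \<in> S" for x y
    using closed that by (simp add: ordinal_sum_def)
  moreover have "ordinal_sum \<pi> r g (ordinal_sum \<pi> r g x y) z = ordinal_sum \<pi> r g x (ordinal_sum \<pi> r g y z)"
    for x y z
    using assms(1-3) grade assoc by (rule ordinal_sum_assoc)
  ultimately show ?thesis
    unfolding semigroup_on_def by blast
qed

lemma solutions_ordinal_sum_subset:
  assumes "total r" and grade: "\<And>x y. \<pi> x = \<pi> y \<Longrightarrow> \<pi> (g x y) = \<pi> x"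
  shows "left_sol S (ordinal_sum \<pi> r g) a b \<union> right_sol S (ordinal_sum \<pi> r g) a b
    \<subseteq> {x. \<pi> x = \<pi> b \<or> (\<pi> x, \<pi> a) \<in> r}"
  using assms unfolding left_sol_def right_sol_def ordinal_sum_def total_on_def
  by (auto split: if_splits) metis+

lemma IP_set_ordinal_sum:
  assumes "trans r" "antisym r" "A \<subseteq> S" "A \<noteq> {}"
    and unbounded: "\<And>a. a \<in> A \<Longrightarrow> \<exists>b\<in>A. (\<pi> a, \<pi> b) \<in> r \<and> \<pi> a \<noteq> \<pi> b"
  shows "IP_set S (ordinal_sum \<pi> r g) A"
proof -
  define R where "R = {(a, b). (\<pi> a, \<pi> b) \<in> r \<and> \<pi> a \<noteq> \<pi> b}"
  have "trans R"
    unfolding R_def by (rule transI) (auto dest: transD[OF assms(1)] antisymD[OF assms(2)])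
  have "\<exists>x. \<forall>n. x n \<in> A \<and> (x n, x (Suc n)) \<in> R"
  proof (rule dependent_nat_choice)
    show "\<exists>a. a \<in> A"
      using assms(4) by blast
    show "\<exists>b. b \<in> A \<and> (a, b) \<in> R" if "a \<in> A" for a and n :: nat
      using unbounded[OF that] unfolding R_def by blast
  qed
  then obtain x where x_in_A: "\<And>n. x n \<in> A" and step: "\<And>n. (x n, x (Suc n)) \<in> R"
    by blast
  have "(x i, x j) \<in> R" if "i < j" for i j
    using that by (induction rule: less_Suc_induct) (use step \<open>trans R\<close> in \<open>auto dest: transD\<close>)
  then have absorb: "ordinal_sum \<pi> r g (x i) (x j) = x j" if "i < j" for i j
    using that unfolding R_def ordinal_sum_def by auto
  have "fin_sum (ordinal_sum \<pi> r g) x H \<in> A" if "finite H" "H \<noteq> {}" for H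
    using fin_sum_absorbing[of "ordinal_sum \<pi> r g" x, OF absorb that] x_in_A by simp
  then show ?thesis
    unfolding IP_set_def using x_in_A assms(3) by blast
qed

definition countably_preceded :: "'a rel \<Rightarrow> 'a set \<Rightarrow> 'a set" where
  "countably_preceded r U = {x \<in> U. countable {y \<in> U. (y, x) \<in> r}}"

lemma countable_countably_preceded_below:
  "t \<in> countably_preceded r U \<Longrightarrow> countable {y \<in> countably_preceded r U. (y, t) \<in> r}"
  unfolding countably_preceded_def by (auto elim: countable_subset[rotated])

lemma uncountable_countably_preceded:
  assumes "wf (r - Id)" "\<not> countable U"
  shows "\<not> countable (countably_preceded r U)"
proof
  let ?T = "countably_preceded r U"
  assume "countable ?T"
  then have "U - ?T \<noteq> {}"
    using assms(2) countable_subset[of U ?T] by auto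
  then obtain z where z: "z \<in> U - ?T" and min: "\<And>y. (y, z) \<in> r - Id \<Longrightarrow> y \<notin> U - ?T"
    using wf_eq_minimal[THEN iffD1, OF assms(1)] by blast
  have "{y \<in> U. (y, z) \<in> r} \<subseteq> insert z ?T"
    using min by auto
  then have "z \<in> ?T"
    using z \<open>countable ?T\<close> countable_subset unfolding countably_preceded_def by fastforce
  with z show False by simp
qed

lemma countable_frac_preimage:
  assumes "countable P"
  shows "countable {x :: real. frac x \<in> P}"
proof -
  have "x \<in> (\<lambda>(p, n). p + of_int n) ` (P \<times> UNIV)" if "frac x \<in> P" for x
    using that by (intro image_eqI[of _ _ "(frac x, \<lfloor>x\<rfloor>)"]) (auto simp: frac_def)
  then have "{x. frac x \<in> P} \<subseteq> (\<lambda>(p, n). p + of_int n) ` (P \<times> UNIV)"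
    by blast
  moreover have "countable ((\<lambda>(p, n). p + of_int n) ` (P \<times> (UNIV :: int set)))"
    using assms by simp
  ultimately show ?thesis
    by (rule countable_subset)
qed

locale well_ordered_reals =
  fixes r :: "real rel"
  assumes trans: "trans r" and antisym: "antisym r" and total: "total r" and wf: "wf (r - Id)"
begin

definition grades :: "real set" where
  "grades = countably_preceded r {0..<1}"

(* The real x stands for the pair (frac x, floor x): a grade and a positive integer. *)
definition carrier :: "real set" where
  "carrier = {x. 1 \<le> x \<and> frac x \<in> grades}"

definition oplus :: "real \<Rightarrow> real \<Rightarrow> real" where
  "oplus = ordinal_sum frac r (\<lambda>x y. x + of_int \<lfloor>y\<rfloor>)"

lemma semigroup_on_carrier: "semigroup_on carrier oplus"
  unfolding oplus_def
proof (rule semigroup_on_ordinal_sum[OF trans antisym total])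
  show "x + of_int \<lfloor>y\<rfloor> + of_int \<lfloor>z\<rfloor> = x + of_int \<lfloor>y + of_int \<lfloor>z\<rfloor>\<rfloor>" for x y z :: real
    by (simp add: floor_add_int[symmetric])
  show "x + of_int \<lfloor>y\<rfloor> \<in> carrier" if "x \<in> carrier" "y \<in> carrier" for x y
  proof -
    have "1 \<le> x" "1 \<le> real_of_int \<lfloor>y\<rfloor>"
      using that by (simp_all add: carrier_def)
    then have "1 \<le> x + real_of_int \<lfloor>y\<rfloor>"
      by linarith
    then show ?thesis
      using that by (simp add: carrier_def)
  qed
qed simp

lemma uncountable_carrier: "\<not> countable carrier"
proof
  assume "countable carrier"
  moreover have "(\<lambda>p. p + 1) ` grades \<subseteq> carrier"
  proof
    fix x assume "x \<in> (\<lambda>p. p + 1) ` grades"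
    then obtain p where "p \<in> grades" "x = p + 1" by blast
    moreover have "frac (p + 1) = p"
      using \<open>p \<in> grades\<close> frac_add_of_int_right[of p 1] frac_eq[of p]
      unfolding grades_def countably_preceded_def by simp
    ultimately show "x \<in> carrier"
      unfolding carrier_def grades_def countably_preceded_def by auto
  qed
  ultimately have "countable ((\<lambda>p. p + 1) ` grades)"
    by (rule countable_subset[rotated])
  then have "countable grades"
    by (rule countable_image_inj_on) (simp add: inj_on_def)
  then show False
    using uncountable_countably_preceded[OF wf] unfolding grades_def
    by (simp add: uncountable_half_open_interval_1)
qed

lemma no_idempotent: "\<not> idempotent_in carrier oplus e"
proof
  assume "idempotent_in carrier oplus e"
  then have "e + of_int \<lfloor>e\<rfloor> = e" "1 \<le> e"
    unfolding idempotent_in_def carrier_def oplus_def ordinal_sum_def by auto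
  then have "\<lfloor>e\<rfloor> = 0" "1 \<le> e"
    by simp_all
  then show False
    using one_le_floor[of e] by linarith
qed

lemma countable_carrier_below:
  assumes "t \<in> grades"
  shows "countable {x \<in> carrier. frac x = s \<or> (frac x, t) \<in> r}"
proof -
  have "{x \<in> carrier. frac x = s \<or> (frac x, t) \<in> r}
      \<subseteq> {x. frac x \<in> insert s {p \<in> grades. (p, t) \<in> r}}"
    unfolding carrier_def by auto
  moreover have "countable (insert s {p \<in> grades. (p, t) \<in> r})"
    using countable_countably_preceded_below assms unfolding grades_def by simp
  ultimately show ?thesis
    using countable_frac_preimage countable_subset by blast
qed

lemma very_weakly_cancellative_carrier: "very_weakly_cancellative carrier oplus"
proof (rule very_weakly_cancellative_if_countable_solutions[OF uncountable_carrier])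
  fix a b assume "a \<in> carrier" "b \<in> carrier"
  then have "countable {x \<in> carrier. frac x = frac b \<or> (frac x, frac a) \<in> r}"
    by (intro countable_carrier_below) (simp add: carrier_def)
  moreover have "left_sol carrier oplus a b \<union> right_sol carrier oplus a b
      \<subseteq> {x. frac x = frac b \<or> (frac x, frac a) \<in> r}"
    unfolding oplus_def by (rule solutions_ordinal_sum_subset[OF total]) simp
  moreover have "left_sol carrier oplus a b \<union> right_sol carrier oplus a b \<subseteq> carrier"
    unfolding left_sol_def right_sol_def by blast
  ultimately show "countable (left_sol carrier oplus a b)" "countable (right_sol carrier oplus a b)"
    by (auto elim: countable_subset[rotated])
qed

lemma IP_set_carrier:
  assumes "A \<subseteq> carrier" "\<not> countable A"
  shows "IP_set carrier oplus A"
  unfolding oplus_def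
proof (rule IP_set_ordinal_sum[OF trans antisym assms(1)])
  show "A \<noteq> {}"
    using assms(2) by auto
  fix a assume "a \<in> A"
  then have "frac a \<in> grades"
    using assms(1) by (auto simp: carrier_def)
  then have "countable {x \<in> carrier. frac x = frac a \<or> (frac x, frac a) \<in> r}"
    by (rule countable_carrier_below)
  then have "\<not> A \<subseteq> {x \<in> carrier. frac x = frac a \<or> (frac x, frac a) \<in> r}"
    using assms(2) countable_subset by meson
  then obtain b where "b \<in> A" "frac a \<noteq> frac b" "(frac b, frac a) \<notin> r"
    using assms(1) unfolding subset_iff by auto
  moreover from this(2,3) have "(frac a, frac b) \<in> r"
    using total by (auto simp: total_on_def)
  ultimately show "\<exists>b\<in>A. (frac a, frac b) \<in> r \<and> frac a \<noteq> frac b"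
    by blast
qed

end

theorem theorem2p7:
  shows "\<exists>(S :: real set) (f :: real \<Rightarrow> real \<Rightarrow> real).
           semigroup_on S f \<and> \<not> countable S \<and> very_weakly_cancellative S f \<and>
           \<not> (\<exists>e. idempotent_in S f e) \<and>
           (\<forall>A. A \<subseteq> S \<and> \<not> countable A \<longrightarrow> IP_set S f A)"
proof -
  obtain r :: "real rel" where "well_order_on UNIV r"
    using well_ordering by metis
  then interpret well_ordered_reals r
    by unfold_locales
      (auto simp: well_order_on_def linear_order_on_def partial_order_on_def preorder_on_def)
  show ?thesis
    using semigroup_on_carrier uncountable_carrier very_weakly_cancellative_carrier
      no_idempotent IP_set_carrier by blast
qed

end
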